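(* Let $\pi$ be a uniformizer of $K_P$ and $L/K_P$ a finite extension. The $\pi$-adic $1$-unit character $\langle\cdot\rangle_\pi:K_P^+\to U_P$ extends uniquely to a character $\langle\cdot\rangle_\pi\in\mathbf{S}_L$ (i.e. a character of $L^+$ in $\mathbf{S}_L$ whose restriction to $K_P^+$ is $\langle\cdot\rangle_\pi$) taking values in $U_{\mathbb{C}_P}$.
   Context: $P$ is a closed point of a smooth projective curve over a finite field of characteristic $p$, $K_P$ its completed function field with valuation $v_P$, $\mathbb{C}_P$ the completion of an algebraic closure of $K_P$. For a complete extension $L$, $L^+=L^\times/\mu_L$ ($\mu_L$ = roots of unity in $L$), $U_L$ the $1$-units of $L$, and $U_P=U_{K_P}$. The $\pi$-adic $1$-unit character is $\langle\alpha\rangle_\pi=\alpha/\pi^{v_P(\alpha)}\in U_P$ for $\alpha\in K_P^+$ (well defined on positive numbers). $\mathbf{S}_L$ is the group of homomorphisms $s:L^+\to\mathbb{C}_P^\times$ for which there exists $y(s)\in\mathbb{Z}_p$ with $s(u)=u^{y(s)}$ for all $u\in U_L$. *)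

theory Defs
  imports Complex_Main "HOL-Computational_Algebra.Polynomial"
begin

(* The ambient field type 'a plays the role of C_P; the absolute value a is
   exp(-v) for the (real-valued) valuation v.  Subfields are subsets of 'a. *)

definition nonarch_abs :: "('a::field \<Rightarrow> real) \<Rightarrow> bool" where
  "nonarch_abs a \<longleftrightarrow> (\<forall>x. a x \<ge> 0) \<and> (\<forall>x. a x = 0 \<longleftrightarrow> x = 0)
     \<and> (\<forall>x y. a (x * y) = a x * a y) \<and> (\<forall>x y. a (x + y) \<le> max (a x) (a y))"

definition is_subfield :: "'a::field set \<Rightarrow> bool" where
  "is_subfield F \<longleftrightarrow> 0 \<in> F \<and> 1 \<in> F \<and>
     (\<forall>x\<in>F. \<forall>y\<in>F. x + y \<in> F \<and> x * y \<in> F) \<and> (\<forall>x\<in>F. - x \<in> F \<and> inverse x \<in> F)"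

definition abs_cauchy :: "('a::field \<Rightarrow> real) \<Rightarrow> (nat \<Rightarrow> 'a) \<Rightarrow> bool" where
  "abs_cauchy a X \<longleftrightarrow> (\<forall>e>0. \<exists>N. \<forall>m\<ge>N. \<forall>n\<ge>N. a (X m - X n) < e)"

definition abs_tendsto :: "('a::field \<Rightarrow> real) \<Rightarrow> (nat \<Rightarrow> 'a) \<Rightarrow> 'a \<Rightarrow> bool" where
  "abs_tendsto a X l \<longleftrightarrow> (\<forall>e>0. \<exists>N. \<forall>n\<ge>N. a (X n - l) < e)"

definition abs_complete :: "('a::field \<Rightarrow> real) \<Rightarrow> 'a set \<Rightarrow> bool" where
  "abs_complete a S \<longleftrightarrow>
     (\<forall>X. (\<forall>n. X n \<in> S) \<and> abs_cauchy a X \<longrightarrow> (\<exists>l\<in>S. abs_tendsto a X l))"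

definition alg_closed :: "'a::field itself \<Rightarrow> bool" where
  "alg_closed _ \<longleftrightarrow> (\<forall>q::'a poly. degree q > 0 \<longrightarrow> (\<exists>x. poly q x = 0))"

definition algebraic_over :: "'a::field set \<Rightarrow> 'a \<Rightarrow> bool" where
  "algebraic_over K x \<longleftrightarrow> (\<exists>q. q \<noteq> 0 \<and> (\<forall>i. coeff q i \<in> K) \<and> poly q x = 0)"

definition finite_ext :: "'a::field set \<Rightarrow> 'a set \<Rightarrow> bool" where
  "finite_ext K L \<longleftrightarrow> (\<exists>B. finite B \<and> B \<subseteq> L \<and>
      L = {\<Sum>b\<in>B. c b * b | c. \<forall>b\<in>B. c b \<in> K})"

definition uniformizer :: "('a::field \<Rightarrow> real) \<Rightarrow> 'a set \<Rightarrow> 'a \<Rightarrow> bool" where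
  "uniformizer a K \<pi> \<longleftrightarrow> \<pi> \<in> K \<and> 0 < a \<pi> \<and> a \<pi> < 1 \<and>
     (\<forall>x\<in>K - {0}. \<exists>n::int. a x = a \<pi> powi n)"

definition finite_residue :: "('a::field \<Rightarrow> real) \<Rightarrow> 'a set \<Rightarrow> bool" where
  "finite_residue a K \<longleftrightarrow> (\<exists>R. finite R \<and> R \<subseteq> K \<and>
     (\<forall>x\<in>K. a x \<le> 1 \<longrightarrow> (\<exists>r\<in>R. a (x - r) < 1)))"

definition roots_of_unity :: "'a::field set \<Rightarrow> 'a set" where
  "roots_of_unity S = {z\<in>S. \<exists>m::nat. m > 0 \<and> z ^ m = 1}"

definition one_units :: "('a::field \<Rightarrow> real) \<Rightarrow> 'a set \<Rightarrow> 'a set" where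
  "one_units a S = {u\<in>S. a (u - 1) < 1}"

definition pi_char :: "('a::field \<Rightarrow> real) \<Rightarrow> 'a set \<Rightarrow> 'a \<Rightarrow> 'a \<Rightarrow> 'a" where
  "pi_char a K \<pi> \<alpha> = (THE u. u \<in> one_units a K \<and>
      (\<exists>n::int. \<exists>\<zeta>\<in>roots_of_unity K. \<alpha> = \<zeta> * \<pi> powi n * u))"

(* p-adic integers as compatible sequences of residues mod p^n *)
definition zp :: "nat \<Rightarrow> (nat \<Rightarrow> int) set" where
  "zp p = {y. \<forall>n. 0 \<le> y n \<and> y n < int p ^ n \<and> y (Suc n) mod (int p ^ n) = y n}"

(* the group S_L: homomorphisms L^+ = L^x / mu_L \<rightarrow> C_P^x which on 1-units are u \<mapsto> u^y, y in Z_p *)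
definition char_S :: "('a::field \<Rightarrow> real) \<Rightarrow> nat \<Rightarrow> 'a set \<Rightarrow> ('a \<Rightarrow> 'a) \<Rightarrow> bool" where
  "char_S a p L s \<longleftrightarrow> (\<forall>x\<in>L - {0}. s x \<noteq> 0) \<and>
     (\<forall>x\<in>L - {0}. \<forall>y\<in>L - {0}. s (x * y) = s x * s y) \<and>
     (\<forall>\<zeta>\<in>roots_of_unity L. s \<zeta> = 1) \<and>
     (\<exists>y\<in>zp p. \<forall>u\<in>one_units a L. abs_tendsto a (\<lambda>n. u ^ nat (y n)) (s u))"

end

(*
  Every x in L^x has a power of the form x^N = pi^k * w^N with w a 1-unit: |x| is a rational
  power of |pi|, because a K-linear relation among 1, x, ..., x^[L:K] has two dominant terms;
  a unit of L has a power that is a 1-unit, because the powers of a unit that stay pairwise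
  incongruent modulo the maximal ideal are roots of one of finitely many reduced polynomials of
  degree at most [L:K]; and N-th roots of 1-units that are again 1-units exist since C_P is
  algebraically closed. In characteristic p the 1-units are torsion free, as
  u^(p^e) - 1 = (u - 1)^(p^e), so w is unique. Hence x |-> w is a character of L^+ that is
  the identity on 1-units, so it lies in S_L with exponent 1. On K it is the pi-adic 1-unit
  character, since K^x = mu_K * pi^Z * U_P (Teichmueller representatives are limits of
  beta^(q^j) in the complete field K). Conversely, a second such character s fixes 1 + pi, and
  |u^t - 1| = |u - 1|^(p^v_p(t)) shows that the exponent of s acts trivially on every 1-unit;
  then s(x)^N = w^N forces s(x) = w.
*)

theory Submission
  imports Defs "HOL-Number_Theory.Cong" "HOL-Library.FuncSet"
begin

lemma coprime_power_cong_1: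
  fixes x b :: nat
  assumes "coprime x b" and "0 < b"
  shows "\<exists>c>0. [x ^ c = 1] (mod b)"
proof -
  have "range (\<lambda>i. x ^ i mod b) \<subseteq> {..<b}"
    using assms(2) by auto
  then have "\<not> inj (\<lambda>i. x ^ i mod b)"
    using finite_subset finite_imageD infinite_UNIV_nat by blast
  then obtain i j where "i < j" and "x ^ i mod b = x ^ j mod b"
    unfolding inj_def by (metis linorder_neqE_nat)
  then have "[x ^ i * x ^ (j - i) = x ^ i * 1] (mod b)"
    by (simp add: cong_def flip: power_add)
  moreover have "coprime (x ^ i) b"
    using assms(1) by simp
  ultimately have "[x ^ (j - i) = 1] (mod b)"
    using cong_mult_lcancel_nat by blast
  then show ?thesis
    using \<open>i < j\<close> by (intro exI[of _ "j - i"]) simp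
qed

lemma power_power_tendsto_0:
  fixes \<rho> :: real and q :: nat
  assumes "0 \<le> \<rho>" and "\<rho> < 1" and "1 < q"
  shows "(\<lambda>j. \<rho> ^ (q ^ j)) \<longlonglongrightarrow> 0"
proof (rule tendsto_sandwich[of "\<lambda>_. 0" _ _ "\<lambda>j. \<rho> ^ j"])
  have "j \<le> q ^ j" for j
    using less_exp[of j] power_mono[of 2 q j] assms(3) by linarith
  then show "\<forall>\<^sub>F j in sequentially. \<rho> ^ (q ^ j) \<le> \<rho> ^ j"
    using assms(1,2) by (simp add: power_decreasing)
  show "(\<lambda>j. \<rho> ^ j) \<longlonglongrightarrow> 0"
    using assms(1,2) by (intro LIMSEQ_power_zero) simp
qed (simp_all add: assms(1))

lemma finite_range_large_fiber:
  fixes F :: "nat \<Rightarrow> 'b"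
  assumes "finite (range F)"
  shows "\<exists>J f. finite J \<and> card J = n \<and> (\<forall>j\<in>J. F j = f)"
proof -
  obtain j0 where "infinite {j. F j = F j0}"
    using pigeonhole_infinite[of "UNIV :: nat set" F] assms by auto
  then obtain J where "finite J" "card J = n" "J \<subseteq> {j. F j = F j0}"
    using infinite_arbitrarily_large by blast
  then show ?thesis
    by blast
qed

text \<open>The \<open>p\<close>-adic integer \<open>1\<close>: its residue modulo \<open>p ^ 0 = 1\<close> is \<open>0\<close>.\<close>

lemma one_mem_zp:
  assumes "1 < p"
  shows "(\<lambda>n. if n = 0 then 0 else 1) \<in> zp p"
  unfolding zp_def
proof (intro CollectI allI conjI)
  fix n
  have "1 < int p ^ n" if "0 < n"
    using assms that by simp
  then show "(if n = 0 then 0 else 1) < int p ^ n"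
    by (cases "n = 0") auto
  show "(if Suc n = 0 then 0 else 1) mod int p ^ n = (if n = 0 then 0 else 1 :: int)"
    using \<open>0 < n \<Longrightarrow> 1 < int p ^ n\<close> by (cases "n = 0") auto
qed simp

section \<open>Subfields and linear dependence\<close>

lemma subfield_0: "is_subfield K \<Longrightarrow> 0 \<in> K"
  and subfield_1: "is_subfield K \<Longrightarrow> 1 \<in> K"
  and subfield_add: "is_subfield K \<Longrightarrow> x \<in> K \<Longrightarrow> y \<in> K \<Longrightarrow> x + y \<in> K"
  and subfield_mult: "is_subfield K \<Longrightarrow> x \<in> K \<Longrightarrow> y \<in> K \<Longrightarrow> x * y \<in> K"
  and subfield_uminus: "is_subfield K \<Longrightarrow> x \<in> K \<Longrightarrow> - x \<in> K"
  and subfield_inverse: "is_subfield K \<Longrightarrow> x \<in> K \<Longrightarrow> inverse x \<in> K"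
  unfolding is_subfield_def by blast+

lemma subfield_diff: "is_subfield K \<Longrightarrow> x \<in> K \<Longrightarrow> y \<in> K \<Longrightarrow> x - y \<in> K"
  using subfield_add[of K x "- y"] subfield_uminus[of K y] by simp

lemma subfield_divide: "is_subfield K \<Longrightarrow> x \<in> K \<Longrightarrow> y \<in> K \<Longrightarrow> x / y \<in> K"
  using subfield_mult[of K x "inverse y"] subfield_inverse[of K y] by (simp add: divide_inverse)

lemma subfield_power: "is_subfield K \<Longrightarrow> x \<in> K \<Longrightarrow> x ^ n \<in> K"
  by (induction n) (auto intro: subfield_1 subfield_mult)

lemma subfield_powi: "is_subfield K \<Longrightarrow> x \<in> K \<Longrightarrow> x powi n \<in> K"
  by (auto simp: power_int_def intro: subfield_power subfield_inverse)

lemma subfield_sum: "is_subfield K \<Longrightarrow> (\<And>i. i \<in> S \<Longrightarrow> f i \<in> K) \<Longrightarrow> sum f S \<in> K"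
  by (induction S rule: infinite_finite_induct) (auto intro: subfield_0 subfield_add)

lemma one_mem_roots_of_unity: "is_subfield K \<Longrightarrow> 1 \<in> roots_of_unity K"
  unfolding roots_of_unity_def by (auto intro: subfield_1 exI[of _ 1])

definition span_over :: "'a::field set \<Rightarrow> 'a set \<Rightarrow> 'a set" where
  "span_over K B = {\<Sum>b\<in>B. c b * b | c. \<forall>b\<in>B. c b \<in> K}"

lemma finite_ext_iff_span_over:
  "finite_ext K L \<longleftrightarrow> (\<exists>B. finite B \<and> B \<subseteq> L \<and> L = span_over K B)"
  unfolding finite_ext_def span_over_def ..

lemma span_over_empty: "span_over K {} = {0}"
  unfolding span_over_def by simp

lemma span_over_insert_decompose:
  assumes "finite B" and "b \<notin> B" and "x \<in> span_over K (insert b B)"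
  shows "\<exists>c\<in>K. x - c * b \<in> span_over K B"
proof -
  obtain c where "\<forall>b'\<in>insert b B. c b' \<in> K" and "x = (\<Sum>b'\<in>insert b B. c b' * b')"
    using assms(3) unfolding span_over_def by blast
  then have "c b \<in> K" and "x - c b * b = (\<Sum>b'\<in>B. c b' * b')" and "\<forall>b'\<in>B. c b' \<in> K"
    using assms(1,2) by auto
  then show ?thesis
    unfolding span_over_def by blast
qed

lemma span_over_diff_scale:
  assumes "is_subfield K" and "x \<in> span_over K B" and "y \<in> span_over K B" and "t \<in> K"
  shows "x - t * y \<in> span_over K B"
proof -
  obtain c d where "\<forall>b\<in>B. c b \<in> K" "x = (\<Sum>b\<in>B. c b * b)"
    and "\<forall>b\<in>B. d b \<in> K" "y = (\<Sum>b\<in>B. d b * b)"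
    using assms(2,3) unfolding span_over_def by blast
  moreover have "(\<Sum>b\<in>B. c b * b) - t * (\<Sum>b\<in>B. d b * b) = (\<Sum>b\<in>B. (c b - t * d b) * b)"
    by (simp add: algebra_simps sum_subtractf sum_distrib_left)
  ultimately show ?thesis
    using assms(1,4) unfolding span_over_def by (fastforce intro: subfield_diff subfield_mult)
qed

definition linearly_dependent_over :: "'a::field set \<Rightarrow> 'i set \<Rightarrow> ('i \<Rightarrow> 'a) \<Rightarrow> bool" where
  "linearly_dependent_over K I v \<longleftrightarrow>
     (\<exists>c. (\<forall>i\<in>I. c i \<in> K) \<and> (\<exists>i\<in>I. c i \<noteq> 0) \<and> (\<Sum>i\<in>I. c i * v i) = 0)"

lemma linearly_dependent_over_eliminate:
  assumes K: "is_subfield K" and "finite I" and "j \<in> I" and t: "\<forall>i\<in>I. t i \<in> K"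
    and "linearly_dependent_over K (I - {j}) (\<lambda>i. v i - t i * v j)"
  shows "linearly_dependent_over K I v"
proof -
  obtain d where d: "\<forall>i\<in>I - {j}. d i \<in> K" "\<exists>i\<in>I - {j}. d i \<noteq> 0"
    "(\<Sum>i\<in>I - {j}. d i * (v i - t i * v j)) = 0"
    using assms(5) unfolding linearly_dependent_over_def by blast
  define c where "c = d(j := - (\<Sum>i\<in>I - {j}. d i * t i))"
  have "(\<Sum>i\<in>I - {j}. d i * t i) \<in> K"
    using d(1) t by (intro subfield_sum[OF K] subfield_mult[OF K]) auto
  then have "\<forall>i\<in>I. c i \<in> K"
    unfolding c_def using d(1) subfield_uminus[OF K] by auto
  moreover have "\<exists>i\<in>I. c i \<noteq> 0"
    using d(2) unfolding c_def by auto
  moreover have "(\<Sum>i\<in>I. c i * v i) = 0"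
  proof -
    have "(\<Sum>i\<in>I. c i * v i) = c j * v j + (\<Sum>i\<in>I - {j}. c i * v i)"
      using assms(2,3) by (simp add: sum.remove)
    also have "\<dots> = (\<Sum>i\<in>I - {j}. d i * v i) - (\<Sum>i\<in>I - {j}. d i * t i) * v j"
      unfolding c_def by simp
    also have "\<dots> = (\<Sum>i\<in>I - {j}. d i * (v i - t i * v j))"
      by (simp add: right_diff_distrib sum_subtractf sum_distrib_right mult.assoc)
    finally show ?thesis
      using d(3) by simp
  qed
  ultimately show ?thesis
    unfolding linearly_dependent_over_def by blast
qed

lemma span_over_linearly_dependent:
  assumes K: "is_subfield K" and "finite B"
    and "finite I" and "card B < card I" and "\<forall>i\<in>I. v i \<in> span_over K B"
  shows "linearly_dependent_over K I v"
  using assms(2-)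
proof (induction B arbitrary: I v rule: finite_induct)
  case empty
  then show ?case
    unfolding linearly_dependent_over_def using subfield_1[OF K]
    by (intro exI[of _ "\<lambda>_. 1"]) (auto simp: span_over_empty card_gt_0_iff)
next
  case (insert b B)
  have "\<forall>i\<in>I. \<exists>c. c \<in> K \<and> v i - c * b \<in> span_over K B"
    using span_over_insert_decompose[OF insert.hyps] insert.prems(3) by blast
  then obtain C where C: "\<forall>i\<in>I. C i \<in> K \<and> v i - C i * b \<in> span_over K B"
    by (rule bchoice[THEN exE])
  show ?case
  proof (cases "\<forall>i\<in>I. C i = 0")
    case True
    then show ?thesis
      using insert.IH[of I v] insert.hyps insert.prems C by simp
  next
    case False
    then obtain j where j: "j \<in> I" "C j \<noteq> 0"
      by blast
    define t where "t i = C i / C j" for i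
    have t: "t i \<in> K" if "i \<in> I" for i
      unfolding t_def using C that j(1) subfield_divide[OF K] by blast
    have "v i - t i * v j \<in> span_over K B" if "i \<in> I" for i
    proof -
      have "v i - C i * b \<in> span_over K B" and "v j - C j * b \<in> span_over K B"
        using C j(1) that by auto
      then have "(v i - C i * b) - t i * (v j - C j * b) \<in> span_over K B"
        using span_over_diff_scale[OF K _ _ t[OF that]] by blast
      moreover have "(v i - C i * b) - t i * (v j - C j * b) = v i - t i * v j"
        unfolding t_def using j(2) by (simp add: algebra_simps)
      ultimately show ?thesis
        by simp
    qed
    moreover have "card B < card (I - {j})"
      using insert j by simp
    ultimately have "linearly_dependent_over K (I - {j}) (\<lambda>i. v i - t i * v j)"
      using insert.IH[of "I - {j}"] insert.prems(1) by simp
    then show ?thesis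
      using linearly_dependent_over_eliminate[OF K insert.prems(1) j(1)] t by blast
  qed
qed

lemma coeff_synthetic_div:
  "coeff (synthetic_div f c) k = coeff f (Suc k) + c * coeff (synthetic_div f c) (Suc k)"
  using arg_cong[OF synthetic_div_correct[of f c], of "\<lambda>q. coeff q (Suc k)"] by simp

lemma coeff_synthetic_div_eq_0:
  assumes "degree f \<le> k"
  shows "coeff (synthetic_div f c) k = 0"
proof (cases "degree f = 0")
  case True
  then have "synthetic_div f c = 0"
    by (simp add: synthetic_div_eq_0_iff)
  then show ?thesis
    by simp
next
  case False
  then show ?thesis
    using assms by (intro coeff_eq_0) (simp add: degree_synthetic_div)
qed

lemma poly_synthetic_div:
  fixes f :: "'a::comm_ring_1 poly"
  shows "poly f y - poly f c = (y - c) * poly (synthetic_div f c) y"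
proof -
  have "poly ([:- c, 1:] * synthetic_div f c + [:poly f c:]) y = poly f y"
    by (subst synthetic_div_correct') simp
  then show ?thesis
    by (simp add: algebra_simps)
qed

section \<open>Non-archimedean absolute values\<close>

locale nonarch_field =
  fixes a :: "'a::field \<Rightarrow> real"
  assumes nonarch: "nonarch_abs a"
begin

lemma absv_nonneg [simp]: "0 \<le> a x"
  using nonarch unfolding nonarch_abs_def by blast

lemma absv_eq_0_iff [simp]: "a x = 0 \<longleftrightarrow> x = 0"
  using nonarch unfolding nonarch_abs_def by blast

lemma absv_zero [simp]: "a 0 = 0"
  by simp

lemma absv_pos_iff [simp]: "0 < a x \<longleftrightarrow> x \<noteq> 0"
  using absv_nonneg[of x] absv_eq_0_iff[of x] by linarith

lemma absv_mult [simp]: "a (x * y) = a x * a y"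
  using nonarch unfolding nonarch_abs_def by blast

lemma absv_ultrametric: "a (x + y) \<le> max (a x) (a y)"
  using nonarch unfolding nonarch_abs_def by blast

lemma absv_one [simp]: "a 1 = 1"
  using absv_mult[of 1 1] absv_eq_0_iff[of 1] by (metis mult_cancel_left1 one_neq_zero)

lemma absv_minus [simp]: "a (- x) = a x"
proof -
  have "a (-1) * a (-1) = 1"
    using absv_mult[of "-1" "-1"] by simp
  then have "a (-1) = 1"
    by (metis absv_nonneg abs_of_nonneg abs_square_eq_1 power2_eq_square)
  then show ?thesis
    using absv_mult[of "-1" x] by simp
qed

lemma absv_diff_commute: "a (x - y) = a (y - x)"
  by (metis absv_minus minus_diff_eq)

lemma absv_power [simp]: "a (x ^ n) = a x ^ n"
  by (induction n) simp_all

lemma absv_inverse [simp]: "a (inverse x) = inverse (a x)"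
proof (cases "x = 0")
  case False
  then have "a x * a (inverse x) = 1"
    using absv_mult[of x "inverse x"] by simp
  then show ?thesis
    by (metis inverse_unique)
qed simp

lemma absv_divide [simp]: "a (x / y) = a x / a y"
  by (simp add: divide_inverse)

lemma absv_powi [simp]: "a (x powi k) = a x powi k"
  by (simp add: power_int_def)

lemma absv_diff_le_max: "a (x - y) \<le> max (a x) (a y)"
  using absv_ultrametric[of x "- y"] by simp

lemma absv_add_dominant:
  assumes "a y < a x"
  shows "a (x + y) = a x"
proof -
  have "a x \<le> max (a (x + y)) (a (- y))"
    using absv_ultrametric[of "x + y" "- y"] by simp
  then show ?thesis
    using absv_ultrametric[of x y] assms by (auto simp: max_def split: if_splits)
qed

lemma absv_sum_le:
  assumes "\<And>i. i \<in> S \<Longrightarrow> a (f i) \<le> r" and "0 \<le> r"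
  shows "a (sum f S) \<le> r"
  using assms
proof (induction S rule: infinite_finite_induct)
  case (insert x F)
  then have "a (f x) \<le> r" and "a (sum f F) \<le> r"
    by auto
  then show ?case
    using absv_ultrametric[of "f x" "sum f F"] insert(1,2) by simp
qed auto

lemma absv_sum_less:
  assumes "\<And>i. i \<in> S \<Longrightarrow> a (f i) < r" and "0 < r"
  shows "a (sum f S) < r"
  using assms
proof (induction S rule: infinite_finite_induct)
  case (insert x F)
  then have "a (f x) < r" and "a (sum f F) < r"
    by auto
  then show ?case
    using absv_ultrametric[of "f x" "sum f F"] insert(1,2) by simp
qed auto

lemma absv_mult_less_1:
  assumes "a x \<le> 1" and "a y < 1"
  shows "a (x * y) < 1"
proof -
  have "a x * a y \<le> a y"
    using assms(1) by (simp add: mult_left_le_one_le)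
  then show ?thesis
    using assms(2) by simp
qed

lemma absv_power_diff_le:
  assumes "a x \<le> 1" and "a y \<le> 1"
  shows "a (x ^ n - y ^ n) \<le> a (x - y)"
proof -
  have "a (\<Sum>i<n. y ^ (n - Suc i) * x ^ i) \<le> 1"
    using assms by (intro absv_sum_le) (auto simp: mult_le_one power_le_one)
  then have "a (x - y) * a (\<Sum>i<n. y ^ (n - Suc i) * x ^ i) \<le> a (x - y)"
    by (simp add: mult_left_le)
  then show ?thesis
    by (simp add: power_diff_sumr2)
qed

lemma root_of_unity_absv:
  assumes "z ^ m = 1" and "0 < m"
  shows "a z = 1"
  using assms absv_power[of z m] power_eq_imp_eq_base[of "a z" m 1] by simp

lemma absv_power_diff_of_unit:
  assumes "a x = 1" and "i \<le> j"
  shows "a (x ^ j - x ^ i) = a (x ^ (j - i) - 1)"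
proof -
  have "x ^ j - x ^ i = x ^ i * (x ^ (j - i) - 1)"
    using assms(2) by (simp add: algebra_simps flip: power_add)
  then show ?thesis
    using assms(1) by simp
qed

lemma powers_separated:
  assumes "a x = 1" and "\<forall>M>0. \<not> a (x ^ M - 1) < 1" and "i \<noteq> j"
  shows "1 \<le> a (x ^ i - x ^ j)"
proof -
  have le: "1 \<le> a (x ^ j' - x ^ i')" if "i' < j'" for i' j'
    using that assms(2)[rule_format, of "j' - i'"] absv_power_diff_of_unit[OF assms(1), of i' j'] by simp
  show ?thesis
  proof (cases "i < j")
    case True
    then show ?thesis
      using le[OF True] absv_diff_commute[of "x ^ i" "x ^ j"] by simp
  next
    case False
    then show ?thesis
      using le[of j i] assms(3) by simp
  qed
qed

lemma sum_eq_0_max_attained_twice: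
  assumes "finite I" and "(\<Sum>i\<in>I. t i) = 0" and "\<exists>i\<in>I. t i \<noteq> 0"
  shows "\<exists>i\<in>I. \<exists>j\<in>I. i \<noteq> j \<and> a (t i) = a (t j) \<and> (\<forall>k\<in>I. a (t k) \<le> a (t i))"
proof -
  have "Max ((\<lambda>k. a (t k)) ` I) \<in> (\<lambda>k. a (t k)) ` I"
    using assms(1,3) by (intro Max_in) auto
  then obtain i where i: "i \<in> I" "a (t i) = Max ((\<lambda>k. a (t k)) ` I)"
    by (metis imageE)
  have max: "\<forall>k\<in>I. a (t k) \<le> a (t i)"
    unfolding i(2) using assms(1) by (auto intro: Max_ge)
  have "0 < a (t i)"
  proof -
    obtain j where "j \<in> I" "t j \<noteq> 0"
      using assms(3) by blast
    then show ?thesis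
      using max absv_pos_iff[of "t j"] by (meson order.strict_trans2)
  qed
  show ?thesis
  proof (rule ccontr)
    assume no_tie: "\<not> ?thesis"
    have less: "a (t k) < a (t i)" if "k \<in> I - {i}" for k
    proof -
      have "k \<in> I" and "i \<noteq> k"
        using that by auto
      then have "a (t i) \<noteq> a (t k)"
        using no_tie i(1) max by metis
      then show ?thesis
        using that max by (simp add: order_less_le)
    qed
    have "(\<Sum>k\<in>I. t k) = t i + (\<Sum>k\<in>I - {i}. t k)"
      using assms(1) i(1) by (simp add: sum.remove)
    moreover have "a (\<Sum>k\<in>I - {i}. t k) < a (t i)"
      using less \<open>0 < a (t i)\<close> by (intro absv_sum_less)
    ultimately have "a (\<Sum>k\<in>I. t k) = a (t i)"
      by (simp add: absv_add_dominant)
    then show False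
      using assms(2) \<open>0 < a (t i)\<close> by simp
  qed
qed

lemma power_relation_absv_ratio:
  assumes "(\<Sum>i\<le>n. c i * y ^ i) = 0" and "\<exists>i\<le>n. c i \<noteq> 0" and "y \<noteq> 0"
  shows "\<exists>i j. i < j \<and> j \<le> n \<and> c i \<noteq> 0 \<and> c j \<noteq> 0 \<and> a y ^ (j - i) = a (c i / c j)"
proof -
  have "\<exists>i\<in>{..n}. \<exists>j\<in>{..n}. i \<noteq> j \<and> a (c i * y ^ i) = a (c j * y ^ j)
      \<and> (\<forall>k\<in>{..n}. a (c k * y ^ k) \<le> a (c i * y ^ i))"
    using assms by (intro sum_eq_0_max_attained_twice) auto
  then obtain i j where ij: "i \<le> n" "j \<le> n" "i \<noteq> j" and eq: "a (c i * y ^ i) = a (c j * y ^ j)"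
    and max: "\<forall>k\<le>n. a (c k * y ^ k) \<le> a (c i * y ^ i)"
    by auto
  obtain k where "k \<le> n" and "c k \<noteq> 0"
    using assms(2) by blast
  then have "0 < a (c k * y ^ k)"
    using assms(3) by simp
  then have "0 < a (c i * y ^ i)"
    using max[rule_format, OF \<open>k \<le> n\<close>] by linarith
  then have nonzero: "c i \<noteq> 0" "c j \<noteq> 0"
    using eq by (auto simp del: absv_mult absv_power)
  have ratio: "a y ^ (j' - i') = a (c i' / c j')"
    if "i' < j'" and "a (c i' * y ^ i') = a (c j' * y ^ j')" and "c j' \<noteq> 0" for i' j'
  proof -
    have "a (c i') * a y ^ i' = a (c j') * (a y ^ i' * a y ^ (j' - i'))"
      using that(1,2) by (simp flip: power_add)
    then show ?thesis
      using that(3) assms(3) by (simp add: field_simps)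
  qed
  show ?thesis
  proof (cases "i < j")
    case True
    then show ?thesis
      using ratio[OF True eq] ij nonzero by blast
  next
    case False
    then have "j < i"
      using ij(3) by simp
    with ratio[OF _ eq[symmetric]] show ?thesis
      using ij nonzero by blast
  qed
qed

lemma one_unit_absv:
  assumes "a (u - 1) < 1"
  shows "a u = 1"
  using absv_add_dominant[of "u - 1" 1] assms by simp

lemma one_unit_power_le:
  assumes "a (u - 1) < 1"
  shows "a (u ^ k - 1) \<le> a (u - 1)"
proof -
  have "a (\<Sum>i<k. u ^ i) \<le> 1"
    using one_unit_absv[OF assms] by (intro absv_sum_le) auto
  then have "a (u - 1) * a (\<Sum>i<k. u ^ i) \<le> a (u - 1)"
    by (simp add: mult_left_le)
  then show ?thesis
    by (simp add: power_diff_1_eq)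
qed

lemma one_unit_power:
  assumes "a (u - 1) < 1"
  shows "a (u ^ k - 1) < 1"
  using one_unit_power_le[OF assms, of k] assms by linarith

lemma one_unit_mult:
  assumes "a (u - 1) < 1" and "a (v - 1) < 1"
  shows "a (u * v - 1) < 1"
proof -
  have eq: "u * v - 1 = u * (v - 1) + (u - 1)"
    by (simp add: algebra_simps)
  have "a (u * (v - 1)) < 1"
    using assms one_unit_absv[OF assms(1)] by (simp add: absv_mult_less_1)
  then have "a (u * (v - 1) + (u - 1)) < 1"
    using absv_ultrametric[of "u * (v - 1)" "u - 1"] assms(1) by simp
  then show ?thesis
    by (subst eq)
qed

lemma one_unit_divide:
  assumes "a (u - 1) < 1" and "a (v - 1) < 1"
  shows "a (u / v - 1) < 1"
proof -
  have "a v = 1"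
    using one_unit_absv[OF assms(2)] .
  then have "v \<noteq> 0"
    by (metis absv_zero zero_neq_one)
  then have "u / v - 1 = ((u - 1) - (v - 1)) / v"
    by (simp add: field_simps)
  then show ?thesis
    using absv_diff_le_max[of "u - 1" "v - 1"] assms \<open>a v = 1\<close> by simp
qed

lemma abs_tendsto_iff: "abs_tendsto a X l \<longleftrightarrow> (\<lambda>n. a (X n - l)) \<longlonglongrightarrow> 0"
  unfolding abs_tendsto_def lim_sequentially dist_real_def by simp

lemma abs_tendsto_unique:
  assumes "abs_tendsto a X l" and "abs_tendsto a X l'"
  shows "l = l'"
proof -
  have bound: "\<forall>n. a (l' - l) \<le> max (a (X n - l)) (a (X n - l'))"
    by (metis absv_diff_le_max diff_diff_eq2 diff_add_cancel add_diff_cancel_left')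
  have "(\<lambda>n. max (a (X n - l)) (a (X n - l'))) \<longlonglongrightarrow> max 0 0"
    using assms unfolding abs_tendsto_iff by (intro tendsto_max)
  then have "a (l' - l) \<le> 0"
    using bound by (intro tendsto_lowerbound) (auto intro: always_eventually)
  then show ?thesis
    by (metis absv_nonneg absv_eq_0_iff antisym eq_iff_diff_eq_0)
qed

lemma abs_tendsto_absv_le:
  assumes "abs_tendsto a X l" and "\<And>n. a (X n) \<le> 1"
  shows "a l \<le> 1"
proof -
  obtain n where "a (X n - l) < 1"
    using assms(1) unfolding abs_tendsto_def by (metis zero_less_one order_refl)
  then show ?thesis
    using absv_diff_le_max[of "X n" "X n - l"] assms(2)[of n] by simp
qed

lemma abs_tendsto_power:
  assumes "abs_tendsto a X l" and "\<And>n. a (X n) \<le> 1"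
  shows "abs_tendsto a (\<lambda>n. X n ^ k) (l ^ k)"
proof -
  have le: "a (X n ^ k - l ^ k) \<le> a (X n - l)" for n
    using assms abs_tendsto_absv_le[OF assms] by (intro absv_power_diff_le)
  show ?thesis
    unfolding abs_tendsto_iff
  proof (rule tendsto_sandwich[of "\<lambda>_. 0" _ _ "\<lambda>n. a (X n - l)"])
    show "(\<lambda>n. a (X n - l)) \<longlonglongrightarrow> 0"
      using assms(1) unfolding abs_tendsto_iff .
  qed (simp_all add: le)
qed

lemma abs_cauchy_if_dist_le:
  assumes dist: "\<And>j m. j \<le> m \<Longrightarrow> a (X m - X j) \<le> \<epsilon> j" and "\<epsilon> \<longlonglongrightarrow> 0"
  shows "abs_cauchy a X"
  unfolding abs_cauchy_def
proof (intro allI impI)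
  fix e :: real
  assume "0 < e"
  then obtain N where N: "\<And>j. N \<le> j \<Longrightarrow> \<epsilon> j < e"
    using \<open>\<epsilon> \<longlonglongrightarrow> 0\<close> unfolding lim_sequentially dist_real_def by fastforce
  have "a (X m - X n) < e" if "N \<le> m" and "N \<le> n" for m n
  proof (cases "n \<le> m")
    case True
    then show ?thesis
      using dist[of n m] N[OF that(2)] by simp
  next
    case False
    then show ?thesis
      using dist[of m n] N[OF that(1)] absv_diff_commute[of "X m"] by simp
  qed
  then show "\<exists>N. \<forall>m\<ge>N. \<forall>n\<ge>N. a (X m - X n) < e"
    by blast
qed

text \<open>If every root had absolute value at least \<open>1\<close>, their product would give
  \<open>a (coeff g 0) \<ge> a (lead_coeff g)\<close>.\<close>

lemma poly_small_root:
  assumes "alg_closed TYPE('a)" and "0 < degree g" and "a (coeff g 0) < a (lead_coeff g)"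
  shows "\<exists>r. poly g r = 0 \<and> a r < 1"
  using assms(2,3)
proof (induction "degree g" arbitrary: g)
  case 0
  then show ?case
    by simp
next
  case (Suc n)
  obtain r0 where r0: "poly g r0 = 0"
    using assms(1) Suc.prems(1) unfolding alg_closed_def by blast
  show ?case
  proof (cases "a r0 < 1")
    case False
    obtain h where h: "g = [:- r0, 1:] * h"
      using r0 by (metis dvdE poly_eq_0_iff_dvd)
    then have "h \<noteq> 0"
      using Suc.prems(1) by auto
    then have "degree g = degree [:- r0, 1:] + degree h"
      using h degree_mult_eq pCons_eq_0_iff zero_neq_one by metis
    then have deg: "degree g = Suc (degree h)"
      by simp
    have lead: "lead_coeff g = lead_coeff h"
      using h lead_coeff_mult[of "[:- r0, 1:]" h] by simp
    have "a (coeff h 0) \<le> a r0 * a (coeff h 0)"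
      using False mult_right_mono[of 1 "a r0" "a (coeff h 0)"] by simp
    also have "\<dots> = a (coeff g 0)"
      using h by (simp add: coeff_mult_0)
    finally have small: "a (coeff h 0) < a (lead_coeff h)"
      using Suc.prems(2) lead by simp
    then have "0 < degree h"
      by (metis leading_coeff_0_iff less_irrefl gr0I)
    then obtain r where "poly h r = 0" and "a r < 1"
      using Suc.hyps(1)[of h] deg Suc.hyps(2) small by auto
    then show ?thesis
      using h by auto
  qed (use r0 in blast)
qed

lemma one_unit_has_root:
  assumes "alg_closed TYPE('a)" and "a (u - 1) < 1" and "0 < N"
  shows "\<exists>w. a (w - 1) < 1 \<and> w ^ N = u"
proof -
  define g where "g = [:1, 1:] ^ N + [:- u:]"
  have "degree ([:1, 1:] ^ N :: 'a poly) = N"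
    by (simp add: degree_power_eq)
  moreover have "lead_coeff ([:1, 1:] ^ N :: 'a poly) = 1"
    by (simp add: lead_coeff_power)
  ultimately have deg: "degree g = N" and lead: "lead_coeff g = 1"
    using assms(3) unfolding g_def by (simp_all add: degree_add_eq_left coeff_pCons split: nat.split)
  have "coeff g 0 = 1 - u"
    unfolding g_def by (simp add: coeff_0_power)
  then have "a (coeff g 0) < a (lead_coeff g)"
    using assms(2) lead absv_diff_commute[of 1 u] by simp
  then obtain t where "poly g t = 0" and "a t < 1"
    using poly_small_root[OF assms(1)] deg assms(3) by blast
  then show ?thesis
    unfolding g_def by (intro exI[of _ "1 + t"]) (simp add: poly_power algebra_simps)
qed

text \<open>The reduction of \<open>f\<close> modulo the maximal ideal has degree exactly \<open>d\<close>.\<close>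

definition has_reduction_degree :: "'a poly \<Rightarrow> nat \<Rightarrow> bool" where
  "has_reduction_degree f d \<longleftrightarrow>
     (\<forall>i. a (coeff f i) \<le> 1) \<and> a (coeff f d) = 1 \<and> (\<forall>i>d. a (coeff f i) < 1)"

lemma poly_absv_eq_1_if_reduction_degree_0:
  assumes "has_reduction_degree f 0" and "a y \<le> 1"
  shows "a (poly f y) = 1"
proof -
  obtain c f' where f: "f = pCons c f'"
    by (cases f) blast
  have "a (coeff f' i * y ^ i) < 1" for i
  proof -
    have "a (coeff f' i) < 1"
      using assms(1) f unfolding has_reduction_degree_def by (metis coeff_pCons_Suc zero_less_Suc)
    moreover have "a (coeff f' i) * a y ^ i \<le> a (coeff f' i)"
      using assms(2) by (simp add: mult_left_le power_le_one)
    ultimately show ?thesis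
      by simp
  qed
  then have "a (poly f' y) < 1"
    unfolding poly_altdef by (intro absv_sum_less) auto
  then have "a (y * poly f' y) < 1"
    using assms(2) by (rule absv_mult_less_1[rotated])
  moreover have "a c = 1"
    using assms(1) f unfolding has_reduction_degree_def by simp
  ultimately show ?thesis
    using f absv_add_dominant by simp
qed

lemma has_reduction_degree_synthetic_div:
  assumes f: "has_reduction_degree f (Suc d)" and "a y \<le> 1"
  shows "has_reduction_degree (synthetic_div f y) d"
proof -
  define g where "g = synthetic_div f y"
  have bound: "a (coeff g k) \<le> 1 \<and> (d < k \<longrightarrow> a (coeff g k) < 1)" for k
  proof (induction "degree f - k" arbitrary: k)
    case 0
    then show ?case
      unfolding g_def by (simp add: coeff_synthetic_div_eq_0)
  next
    case (Suc n)
    then have IH: "a (coeff g (Suc k)) \<le> 1 \<and> (d < Suc k \<longrightarrow> a (coeff g (Suc k)) < 1)"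
      by (metis Suc_diff_Suc diff_Suc_1 zero_less_Suc zero_less_diff)
    have "a (y * coeff g (Suc k)) \<le> 1"
      using IH \<open>a y \<le> 1\<close> by (simp add: mult_le_one)
    moreover have "a (y * coeff g (Suc k)) < 1" if "d < k"
      using IH \<open>a y \<le> 1\<close> that absv_mult_less_1[of y "coeff g (Suc k)"] by simp
    moreover have "a (coeff f (Suc k)) \<le> 1" and "d < k \<Longrightarrow> a (coeff f (Suc k)) < 1"
      using f unfolding has_reduction_degree_def by auto
    ultimately show ?case
      using absv_ultrametric[of "coeff f (Suc k)" "y * coeff g (Suc k)"] coeff_synthetic_div[of f y k]
      unfolding g_def by auto
  qed
  have "a (y * coeff g (Suc d)) < 1"
    using bound[of "Suc d"] \<open>a y \<le> 1\<close> absv_mult_less_1[of y "coeff g (Suc d)"] by simp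
  then have "a (coeff g d) = 1"
    using coeff_synthetic_div[of f y d] absv_add_dominant f unfolding has_reduction_degree_def g_def
    by simp
  then show ?thesis
    using bound unfolding has_reduction_degree_def g_def by blast
qed

lemma reduced_root_synthetic_div:
  assumes "a (poly f y) < 1" and "a (poly f y0) < 1"
    and "a y \<le> 1" and "a y0 \<le> 1" and "1 \<le> a (y - y0)"
  shows "a (poly (synthetic_div f y0) y) < 1"
proof -
  have "a ((y - y0) * poly (synthetic_div f y0) y) < 1"
    using poly_synthetic_div[of f y y0] assms(1,2) absv_diff_le_max[of "poly f y" "poly f y0"]
    by (metis max_less_iff_conj le_less_trans)
  moreover have "a (y - y0) \<le> 1"
    using assms(3,4) order_trans[OF absv_diff_le_max[of y y0]] by simp
  then have "a (y - y0) = 1"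
    using assms(5) by simp
  ultimately show ?thesis
    by simp
qed

lemma card_reduced_roots_le:
  assumes "has_reduction_degree f d" and "\<forall>y\<in>Y. a y \<le> 1 \<and> a (poly f y) < 1"
    and "pairwise (\<lambda>y y'. 1 \<le> a (y - y')) Y"
  shows "card Y \<le> d"
  using assms
proof (induction d arbitrary: f Y)
  case 0
  have "y \<notin> Y" for y
    using 0 poly_absv_eq_1_if_reduction_degree_0[of f y] by auto
  then have "Y = {}"
    by blast
  then show ?case
    by simp
next
  case (Suc d)
  show ?case
  proof (cases "finite Y \<and> Y \<noteq> {}")
    case True
    then obtain y0 where y0: "y0 \<in> Y"
      by blast
    have "\<forall>y\<in>Y - {y0}. a y \<le> 1 \<and> a (poly (synthetic_div f y0) y) < 1"
      using Suc.prems(2,3) y0 reduced_root_synthetic_div unfolding pairwise_def by blast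
    moreover have "pairwise (\<lambda>y y'. 1 \<le> a (y - y')) (Y - {y0})"
      using Suc.prems(3) by (rule pairwise_subset) blast
    moreover have "has_reduction_degree (synthetic_div f y0) d"
      using Suc.prems(1,2) y0 by (intro has_reduction_degree_synthetic_div) auto
    ultimately have "card (Y - {y0}) \<le> d"
      using Suc.IH by blast
    then show ?thesis
      using True y0 by simp
  qed auto
qed

lemma has_reduction_degreeI:
  assumes "\<forall>i. a (coeff f i) \<le> 1" and "a (coeff f i) = 1"
  shows "\<exists>d\<le>degree f. has_reduction_degree f d"
proof -
  define D where "D = {i. a (coeff f i) = 1}"
  have "D \<subseteq> {..degree f}"
    unfolding D_def by (auto intro!: le_degree)
  then have "finite D" and "i \<in> D"
    using assms(2) finite_subset unfolding D_def by auto
  define d where "d = Max D"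
  have "d \<in> D"
    unfolding d_def using \<open>finite D\<close> \<open>i \<in> D\<close> by (intro Max_in) auto
  have "a (coeff f k) < 1" if "d < k" for k
  proof -
    have "k \<notin> D"
      using that Max_ge[OF \<open>finite D\<close>, of k] unfolding d_def by auto
    then show ?thesis
      using assms(1) unfolding D_def by (simp add: order_less_le)
  qed
  moreover have "d \<le> degree f"
    using \<open>d \<in> D\<close> \<open>D \<subseteq> {..degree f}\<close> by auto
  ultimately show ?thesis
    using assms(1) \<open>d \<in> D\<close> unfolding has_reduction_degree_def D_def by auto
qed

lemma reduced_poly_of_congruent_coeffs:
  assumes c: "\<forall>i\<le>n. a (c i) \<le> 1 \<and> a (c i - r i) < 1" and "i0 \<le> n" and "c i0 = 1"
    and "(\<Sum>i\<le>n. c i * z ^ i) = 0" and "a z \<le> 1"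
  shows "\<exists>d\<le>n. has_reduction_degree (\<Sum>i\<le>n. monom (r i) i) d \<and> a (poly (\<Sum>i\<le>n. monom (r i) i) z) < 1"
proof -
  define f where "f = (\<Sum>i\<le>n. monom (r i) i)"
  have coeff_f: "coeff f k = (if k \<le> n then r k else 0)" for k
    unfolding f_def by (simp add: coeff_sum)
  have "a (coeff f k) \<le> 1" for k
    using c order_trans[OF absv_diff_le_max[of "c k" "c k - r k"]] unfolding coeff_f by auto
  moreover have "a (r i0 - 1) < 1"
    using c assms(2,3) absv_diff_commute[of 1 "r i0"] by auto
  then have "a (coeff f i0) = 1"
    using one_unit_absv assms(2) unfolding coeff_f by simp
  ultimately obtain d where "d \<le> degree f" and "has_reduction_degree f d"
    using has_reduction_degreeI by blast
  moreover have "degree f \<le> n"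
    by (rule degree_le) (simp add: coeff_f)
  moreover have "poly f z = (\<Sum>i\<le>n. (r i - c i) * z ^ i)"
    using assms(4) unfolding f_def by (simp add: poly_sum poly_monom algebra_simps sum_subtractf)
  moreover have "a ((r i - c i) * z ^ i) < 1" if "i \<le> n" for i
  proof -
    have "a (r i - c i) < 1"
      using c that absv_diff_commute[of "r i"] by simp
    moreover have "a (r i - c i) * a z ^ i \<le> a (r i - c i)"
      using assms(5) by (simp add: mult_left_le power_le_one)
    ultimately show ?thesis
      by simp
  qed
  ultimately have "d \<le> n" and "has_reduction_degree f d" and "a (poly f z) < 1"
    by (auto intro: absv_sum_less)
  then show ?thesis
    unfolding f_def by blast
qed

end

section \<open>One-units in characteristic \<open>p\<close>\<close>

locale nonarch_field_char = nonarch_field a for a :: "'a::field \<Rightarrow> real" +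
  fixes p :: nat
  assumes prime_p: "prime p" and CHAR_eq: "CHAR('a) = p"
begin

lemma power_prime_power_add: "(x + y :: 'a) ^ (p ^ e) = x ^ (p ^ e) + y ^ (p ^ e)"
  using freshmans_dream'[of "p ^ e" e x y] prime_p CHAR_eq by simp

lemma power_prime_power_minus_1: "(u :: 'a) ^ (p ^ e) - 1 = (u - 1) ^ (p ^ e)"
  using power_prime_power_add[of "u - 1" 1 e] by simp

lemma absv_of_nat_coprime:
  assumes "\<not> p dvd b"
  shows "a (of_nat b) = 1"
proof -
  obtain c where "0 < c" and "[b ^ c = 1] (mod CHAR('a))"
    using coprime_power_cong_1[of b p] assms prime_p CHAR_eq
    by (metis prime_gt_0_nat prime_imp_coprime coprime_commute)
  then have "(of_nat b :: 'a) ^ c = 1"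
    by (metis of_nat_1 of_nat_eq_iff_cong_CHAR of_nat_power)
  then show ?thesis
    using \<open>0 < c\<close> by (rule root_of_unity_absv)
qed

lemma one_unit_power_coprime:
  assumes "a (u - 1) < 1" and "\<not> p dvd b"
  shows "a (u ^ b - 1) = a (u - 1)"
proof -
  have "(\<Sum>i<b. u ^ i) = of_nat b + (\<Sum>i<b. u ^ i - 1)"
    by (simp add: sum_subtractf)
  moreover have "a (\<Sum>i<b. u ^ i - 1) < 1"
    using one_unit_power[OF assms(1)] by (intro absv_sum_less) auto
  ultimately have "a (\<Sum>i<b. u ^ i) = 1"
    using absv_add_dominant absv_of_nat_coprime[OF assms(2)] by simp
  then show ?thesis
    by (simp add: power_diff_1_eq)
qed

lemma one_unit_power_minus_1:
  assumes "a (u - 1) < 1" and "0 < t"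
  shows "a (u ^ t - 1) = a (u - 1) ^ (p ^ multiplicity p t)"
proof -
  obtain b where t: "t = p ^ multiplicity p t * b" and "\<not> p dvd b"
    using multiplicity_decompose'[of t p] assms(2) prime_p by (metis not_prime_unit neq0_conv)
  have "u ^ t - 1 = (u ^ b - 1) ^ (p ^ multiplicity p t)"
    by (subst t) (metis power_prime_power_minus_1 mult.commute power_mult)
  then show ?thesis
    using one_unit_power_coprime[OF assms(1) \<open>\<not> p dvd b\<close>] by simp
qed

lemma one_unit_torsion_free:
  assumes "a (u - 1) < 1" and "u ^ m = 1" and "0 < m"
  shows "u = 1"
  using one_unit_power_minus_1[OF assms(1,3)] assms(2) by simp

text \<open>By \<open>one_unit_power_minus_1\<close>, for \<open>m > 0\<close> both sides depend on \<open>m\<close> only through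
  the \<open>p\<close>-adic valuation of \<open>m - 1\<close>.\<close>

lemma one_unit_power_dist_powr:
  assumes u: "a (u - 1) < 1" "u \<noteq> 1" and v: "a (v - 1) < 1" "v \<noteq> 1"
  shows "a (u ^ m - u) = a (v ^ m - v) powr (ln (a (u - 1)) / ln (a (v - 1)))"
proof -
  define c where "c = ln (a (u - 1)) / ln (a (v - 1))"
  have "0 < a (v - 1)" and "0 < a (u - 1)"
    using u(2) v(2) by simp_all
  then have base: "a (v - 1) powr c = a (u - 1)"
    using v(1) by (simp add: c_def powr_def)
  show ?thesis
  proof (cases m)
    case 0
    then have "a (u ^ m - u) = a (u - 1)" and "a (v ^ m - v) = a (v - 1)"
      by (simp_all add: absv_diff_commute)
    then show ?thesis
      using base by (simp add: c_def)
  next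
    case (Suc t)
    have "a u = 1" and "a v = 1"
      using u(1) v(1) by (simp_all add: one_unit_absv)
    have shift: "a (x ^ Suc t - x) = a (x ^ t - 1)" if "a x = 1" for x
      using absv_power_diff_of_unit[OF that, of 1 "Suc t"] by simp
    show ?thesis
    proof (cases "t = 0")
      case False
      then have "a (u ^ t - 1) = (a (v - 1) powr c) ^ (p ^ multiplicity p t)"
        using one_unit_power_minus_1[OF u(1)] base by simp
      also have "\<dots> = a (v ^ t - 1) powr c"
        using one_unit_power_minus_1[OF v(1)] False \<open>0 < a (v - 1)\<close>
        by (simp add: powr_power powr_realpow[symmetric] powr_powr mult.commute)
      finally show ?thesis
        using Suc shift \<open>a u = 1\<close> \<open>a v = 1\<close> by (simp add: c_def)
    qed (use Suc in simp)
  qed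
qed

lemma one_unit_exponents_tendsto:
  assumes u: "a (u - 1) < 1" and v: "a (v - 1) < 1" "v \<noteq> 1"
    and lim: "abs_tendsto a (\<lambda>n. v ^ m n) v"
  shows "abs_tendsto a (\<lambda>n. u ^ m n) u"
proof (cases "u = 1")
  case False
  define c where "c = ln (a (u - 1)) / ln (a (v - 1))"
  have "0 < a (u - 1)" and "0 < a (v - 1)"
    using False v(2) by simp_all
  then have "0 < c"
    using u v(1) unfolding c_def by (simp add: divide_neg_neg)
  have "(\<lambda>n. a (v ^ m n - v) powr c) \<longlonglongrightarrow> 0"
    using lim \<open>0 < c\<close> unfolding abs_tendsto_iff by (intro tendsto_zero_powrI) auto
  then show ?thesis
    unfolding abs_tendsto_iff c_def one_unit_power_dist_powr[OF u False v] .
qed (simp add: abs_tendsto_def)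


lemma one_unit_power_coprime_exponent:
  assumes "0 < M" and "a (\<beta> ^ M - 1) < 1"
  shows "\<exists>b>0. \<not> p dvd b \<and> a (\<beta> ^ b - 1) < 1"
proof -
  obtain b where M: "M = p ^ multiplicity p M * b" and "\<not> p dvd b"
    using multiplicity_decompose'[of M p] assms(1) prime_p by (metis not_prime_unit neq0_conv)
  then have "0 < b"
    using assms(1) by (cases "b = 0") auto
  have "a (\<beta> ^ b - 1) ^ (p ^ multiplicity p M) = a (\<beta> ^ M - 1)"
    by (subst M) (simp add: power_mult mult.commute power_prime_power_minus_1)
  then have "a (\<beta> ^ b - 1) < 1"
    using assms(2) one_le_power[of "a (\<beta> ^ b - 1)" "p ^ multiplicity p M"] by linarith
  then show ?thesis
    using \<open>0 < b\<close> \<open>\<not> p dvd b\<close> by blast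
qed

lemma frobenius_orbit_dist:
  assumes "a \<beta> = 1" and \<gamma>: "a (\<beta> ^ b - 1) < 1" and "[p ^ c = 1] (mod b)" and "j \<le> m"
  shows "a (\<beta> ^ (p ^ c) ^ m - \<beta> ^ (p ^ c) ^ j) \<le> a (\<beta> ^ b - 1) ^ (p ^ c) ^ j"
proof -
  define T where "T = p ^ c"
  have "[T ^ (m - j) = 1] (mod b)"
    using cong_pow[OF assms(3), of "m - j"] unfolding T_def by simp
  then obtain l where l: "T ^ (m - j) - 1 = b * l"
    using cong_to_1_nat by blast
  have "T ^ j \<le> T ^ m"
    using assms(4) prime_gt_0_nat[OF prime_p] unfolding T_def by (simp add: power_increasing)
  moreover have "T ^ m - T ^ j = (T ^ (m - j) - 1) * p ^ (c * j)"
    using assms(4) unfolding T_def by (simp add: diff_mult_distrib power_mult flip: power_add)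
  moreover have "\<beta> ^ ((T ^ (m - j) - 1) * p ^ (c * j)) - 1 = (\<beta> ^ (T ^ (m - j) - 1) - 1) ^ p ^ (c * j)"
    by (simp only: power_mult[of \<beta> "T ^ (m - j) - 1"] power_prime_power_minus_1)
  ultimately have "a (\<beta> ^ T ^ m - \<beta> ^ T ^ j) = a ((\<beta> ^ b) ^ l - 1) ^ T ^ j"
    using absv_power_diff_of_unit[OF assms(1), of "T ^ j" "T ^ m"] l
    unfolding T_def by (simp add: power_mult)
  also have "\<dots> \<le> a (\<beta> ^ b - 1) ^ T ^ j"
    using one_unit_power_le[OF \<gamma>] by (simp add: power_mono)
  finally show ?thesis
    unfolding T_def .
qed

lemma frobenius_orbit_limit:
  assumes "a \<beta> = 1" and \<gamma>: "a (\<beta> ^ b - 1) < 1" and "[p ^ c = 1] (mod b)" and "0 < c"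
    and lim: "abs_tendsto a (\<lambda>j. \<beta> ^ (p ^ c) ^ j) \<zeta>"
  shows "\<zeta> ^ b = 1" and "a (\<zeta> - \<beta>) < 1"
proof -
  have "1 < p ^ c"
    using prime_gt_1_nat[OF prime_p] \<open>0 < c\<close> by (rule one_less_power)
  have "a ((\<beta> ^ (p ^ c) ^ j) ^ b - 1) = a (\<beta> ^ b - 1) ^ (p ^ c) ^ j" for j
  proof -
    have "(p ^ c) ^ j = p ^ (c * j)"
      by (simp add: power_mult)
    moreover have "(\<beta> ^ p ^ (c * j)) ^ b = (\<beta> ^ b) ^ p ^ (c * j)"
      by (simp add: mult.commute flip: power_mult)
    ultimately show ?thesis
      by (simp add: power_prime_power_minus_1)
  qed
  then have "abs_tendsto a (\<lambda>j. (\<beta> ^ (p ^ c) ^ j) ^ b) 1"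
    unfolding abs_tendsto_iff using power_power_tendsto_0[OF _ \<gamma> \<open>1 < p ^ c\<close>] by simp
  moreover have "abs_tendsto a (\<lambda>j. (\<beta> ^ (p ^ c) ^ j) ^ b) (\<zeta> ^ b)"
    using assms(1) by (intro abs_tendsto_power[OF lim]) simp
  ultimately show "\<zeta> ^ b = 1"
    using abs_tendsto_unique by blast
  obtain n where n: "a (\<beta> ^ (p ^ c) ^ n - \<zeta>) < 1"
    using lim unfolding abs_tendsto_def by (metis zero_less_one order_refl)
  have "a (\<beta> ^ (p ^ c) ^ n - \<beta>) < 1"
    using frobenius_orbit_dist[OF assms(1-3), of 0 n] \<gamma> by simp
  then show "a (\<zeta> - \<beta>) < 1"
    using n absv_diff_le_max[of "\<beta> ^ (p ^ c) ^ n - \<beta>" "\<beta> ^ (p ^ c) ^ n - \<zeta>"] by simp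
qed
end

section \<open>Finite extensions of a local field\<close>

locale local_field_extension = nonarch_field_char a p for a :: "'a::field \<Rightarrow> real" and p +
  fixes K L :: "'a set" and \<pi> :: 'a and B R :: "'a set"
  assumes subfield_K: "is_subfield K" and subfield_L: "is_subfield L" and K_subset_L: "K \<subseteq> L"
    and complete_K: "abs_complete a K" and uniformizer: "uniformizer a K \<pi>"
    and alg_closed: "alg_closed TYPE('a)"
    and finite_B: "finite B" and L_eq_span: "L = span_over K B"
    and finite_R: "finite R" and residue_reps: "\<forall>x\<in>K. a x \<le> 1 \<longrightarrow> (\<exists>r\<in>R. a (x - r) < 1)"
begin

lemma uniformizer_mem: "\<pi> \<in> K"
  and absv_uniformizer_pos: "0 < a \<pi>"
  and absv_uniformizer_less_1: "a \<pi> < 1"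
  and absv_eq_uniformizer_powi: "x \<in> K \<Longrightarrow> x \<noteq> 0 \<Longrightarrow> \<exists>k::int. a x = a \<pi> powi k"
  using uniformizer unfolding uniformizer_def by blast+

lemma uniformizer_nonzero: "\<pi> \<noteq> 0"
  using absv_uniformizer_pos by simp

lemma absv_uniformizer_powi_inj:
  assumes "a \<pi> powi k = a \<pi> powi k'"
  shows "k = k'"
  using assms absv_uniformizer_pos absv_uniformizer_less_1
  by (metis linorder_neqE power_int_strict_decreasing less_irrefl)

lemma powers_linearly_dependent:
  assumes "y \<in> L"
  shows "linearly_dependent_over K {..card B} (\<lambda>i. y ^ i)"
  using subfield_power[OF subfield_L assms] L_eq_span
  by (intro span_over_linearly_dependent[OF subfield_K finite_B]) auto

lemma absv_power_eq_uniformizer_powi: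
  assumes "y \<in> L" and "y \<noteq> 0"
  shows "\<exists>m>0. \<exists>k::int. a y ^ m = a \<pi> powi k"
proof -
  obtain c where c: "\<forall>i\<le>card B. c i \<in> K" "\<exists>i\<le>card B. c i \<noteq> 0" "(\<Sum>i\<le>card B. c i * y ^ i) = 0"
    using powers_linearly_dependent[OF assms(1)] unfolding linearly_dependent_over_def by auto
  then obtain i j where "i < j" and "j \<le> card B" and "c i \<noteq> 0" and "c j \<noteq> 0"
    and ratio: "a y ^ (j - i) = a (c i / c j)"
    using power_relation_absv_ratio assms(2) by blast
  then have "c i / c j \<in> K" and "c i / c j \<noteq> 0"
    using c(1) subfield_divide[OF subfield_K] by simp_all
  then obtain k where "a (c i / c j) = a \<pi> powi k"
    using absv_eq_uniformizer_powi by blast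
  then show ?thesis
    using ratio \<open>i < j\<close> by (intro exI[of _ "j - i"]) auto
qed

lemma normalized_powers_relation:
  assumes "z \<in> L"
  shows "\<exists>c. (\<forall>i\<le>card B. c i \<in> K \<and> a (c i) \<le> 1) \<and> (\<exists>i\<le>card B. c i = 1)
    \<and> (\<Sum>i\<le>card B. c i * z ^ i) = 0"
proof -
  obtain c where c: "\<forall>i\<le>card B. c i \<in> K" "\<exists>i\<le>card B. c i \<noteq> 0" "(\<Sum>i\<le>card B. c i * z ^ i) = 0"
    using powers_linearly_dependent[OF assms] unfolding linearly_dependent_over_def by auto
  define M where "M = Max ((\<lambda>i. a (c i)) ` {..card B})"
  have "M \<in> (\<lambda>i. a (c i)) ` {..card B}"
    unfolding M_def by (intro Max_in) auto
  then obtain i0 where i0: "i0 \<le> card B" "M = a (c i0)"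
    unfolding image_iff atMost_iff by blast
  have max: "a (c i) \<le> a (c i0)" if "i \<le> card B" for i
    unfolding i0(2)[symmetric] M_def using that by (intro Max_ge) auto
  obtain k where "k \<le> card B" and "c k \<noteq> 0"
    using c(2) by blast
  then have "c i0 \<noteq> 0"
    using max[of k] absv_pos_iff[of "c k"] by (auto simp del: absv_pos_iff)
  define c' where "c' i = c i / c i0" for i
  have "c' i \<in> K \<and> a (c' i) \<le> 1" if "i \<le> card B" for i
    unfolding c'_def using c(1) that i0(1) max[OF that] \<open>c i0 \<noteq> 0\<close> subfield_divide[OF subfield_K]
    by simp
  moreover have "c' i0 = 1"
    unfolding c'_def using \<open>c i0 \<noteq> 0\<close> by simp
  moreover have "(\<Sum>i\<le>card B. c' i * z ^ i) = 0"
    unfolding c'_def using c(3) by (simp add: times_divide_eq_left flip: sum_divide_distrib)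
  ultimately show ?thesis
    using i0(1) by (intro exI[of _ c']) auto
qed

text \<open>Lifts of all polynomials of degree at most \<open>card B\<close> over the residue field of \<open>K\<close>.\<close>

definition residue_polys :: "'a poly set" where
  "residue_polys = (\<lambda>r. \<Sum>i\<le>card B. monom (r i) i) ` PiE {..card B} (\<lambda>_. R)"

lemma finite_residue_polys: "finite residue_polys"
  unfolding residue_polys_def using finite_R by (intro finite_imageI finite_PiE) auto

lemma unit_reduces_to_residue_poly:
  assumes "z \<in> L" and "a z = 1"
  shows "\<exists>f\<in>residue_polys. \<exists>d\<le>card B. has_reduction_degree f d \<and> a (poly f z) < 1"
proof -
  obtain c where c: "\<forall>i\<le>card B. c i \<in> K \<and> a (c i) \<le> 1" "\<exists>i\<le>card B. c i = 1"
    "(\<Sum>i\<le>card B. c i * z ^ i) = 0"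
    using normalized_powers_relation[OF assms(1)] by blast
  have "\<forall>i\<in>{..card B}. \<exists>r. r \<in> R \<and> a (c i - r) < 1"
    using residue_reps c(1) by auto
  then obtain r where r: "\<forall>i\<in>{..card B}. r i \<in> R \<and> a (c i - r i) < 1"
    by (rule bchoice[THEN exE])
  have "restrict r {..card B} \<in> PiE {..card B} (\<lambda>_. R)"
    using r by auto
  then have "(\<Sum>i\<le>card B. monom (r i) i) \<in> residue_polys"
    unfolding residue_polys_def by (rule rev_image_eqI) simp
  moreover have "\<forall>i\<le>card B. a (c i) \<le> 1 \<and> a (c i - r i) < 1"
    using c(1) r by auto
  moreover obtain i0 where "i0 \<le> card B" and "c i0 = 1"
    using c(2) by blast
  ultimately show ?thesis
    using reduced_poly_of_congruent_coeffs[of "card B" c r i0 z] c(3) assms(2) by auto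
qed

lemma unit_power_one_unit:
  assumes "\<beta> \<in> L" and "a \<beta> = 1"
  shows "\<exists>M>0. a (\<beta> ^ M - 1) < 1"
proof (rule ccontr)
  assume "\<not> ?thesis"
  then have separated: "1 \<le> a (\<beta> ^ i - \<beta> ^ j)" if "i \<noteq> j" for i j
    using powers_separated[OF assms(2) _ that] by blast
  have "\<exists>f. f \<in> residue_polys \<and> (\<exists>d\<le>card B. has_reduction_degree f d \<and> a (poly f (\<beta> ^ j)) < 1)"
    for j
    using unit_reduces_to_residue_poly[of "\<beta> ^ j"] subfield_power[OF subfield_L assms(1), of j] assms(2)
    by auto
  then obtain F where F: "\<And>j. F j \<in> residue_polys"
    and F_root: "\<And>j. \<exists>d\<le>card B. has_reduction_degree (F j) d \<and> a (poly (F j) (\<beta> ^ j)) < 1"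
    by metis
  have "finite (range F)"
    using F finite_residue_polys by (meson finite_subset image_subsetI)
  then obtain J f where J: "finite J" "card J = Suc (card B)" "\<forall>j\<in>J. F j = f"
    using finite_range_large_fiber by blast
  then obtain j0 where "j0 \<in> J"
    by fastforce
  then obtain d where d: "d \<le> card B" "has_reduction_degree f d"
    using F_root J(3) by metis
  have "inj_on (\<lambda>j. \<beta> ^ j) J"
    using separated by (intro inj_onI) (metis absv_zero diff_self not_one_le_zero)
  then have "card ((\<lambda>j. \<beta> ^ j) ` J) = Suc (card B)"
    using J(2) by (simp add: card_image)
  moreover have "card ((\<lambda>j. \<beta> ^ j) ` J) \<le> d"
  proof (rule card_reduced_roots_le[OF d(2)])
    show "\<forall>y\<in>(\<lambda>j. \<beta> ^ j) ` J. a y \<le> 1 \<and> a (poly f y) < 1"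
      using J(3) F_root assms(2) by fastforce
    show "pairwise (\<lambda>y y'. 1 \<le> a (y - y')) ((\<lambda>j. \<beta> ^ j) ` J)"
      unfolding pairwise_def using separated by (metis imageE)
  qed
  ultimately show False
    using d(1) by simp
qed

text \<open>The Teichmueller representative of \<open>\<beta>\<close> is the limit of \<open>\<beta> ^ (p ^ c) ^ j\<close>, where
  \<open>\<beta> ^ b\<close> is a 1-unit for some \<open>b\<close> prime to \<open>p\<close> and \<open>p ^ c = 1\<close> modulo \<open>b\<close>.\<close>

lemma teichmueller_lift:
  assumes "\<beta> \<in> K" and "a \<beta> = 1"
  shows "\<exists>\<zeta>\<in>K. \<exists>b>0. \<zeta> ^ b = 1 \<and> a (\<zeta> - \<beta>) < 1"
proof -
  obtain M where "0 < M" and "a (\<beta> ^ M - 1) < 1"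
    using unit_power_one_unit assms K_subset_L by blast
  then obtain b where "0 < b" and "\<not> p dvd b" and \<gamma>: "a (\<beta> ^ b - 1) < 1"
    using one_unit_power_coprime_exponent by blast
  obtain c where "0 < c" and c: "[p ^ c = 1] (mod b)"
    using coprime_power_cong_1[OF prime_imp_coprime[OF prime_p \<open>\<not> p dvd b\<close>] \<open>0 < b\<close>] by blast
  have "1 < p ^ c"
    using prime_gt_1_nat[OF prime_p] \<open>0 < c\<close> by (rule one_less_power)
  have "abs_cauchy a (\<lambda>j. \<beta> ^ (p ^ c) ^ j)"
  proof (rule abs_cauchy_if_dist_le)
    show "a (\<beta> ^ (p ^ c) ^ m - \<beta> ^ (p ^ c) ^ j) \<le> a (\<beta> ^ b - 1) ^ (p ^ c) ^ j" if "j \<le> m" for j m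
      using frobenius_orbit_dist[OF assms(2) \<gamma> c that] .
    show "(\<lambda>j. a (\<beta> ^ b - 1) ^ (p ^ c) ^ j) \<longlonglongrightarrow> 0"
      using power_power_tendsto_0[OF absv_nonneg \<gamma> \<open>1 < p ^ c\<close>] .
  qed
  moreover have "\<forall>j. \<beta> ^ (p ^ c) ^ j \<in> K"
    using subfield_power[OF subfield_K assms(1)] by blast
  ultimately obtain \<zeta> where "\<zeta> \<in> K" and lim: "abs_tendsto a (\<lambda>j. \<beta> ^ (p ^ c) ^ j) \<zeta>"
    using complete_K[unfolded abs_complete_def, rule_format, of "\<lambda>j. \<beta> ^ (p ^ c) ^ j"] by blast
  show ?thesis
    using frobenius_orbit_limit[OF assms(2) \<gamma> c \<open>0 < c\<close> lim] \<open>\<zeta> \<in> K\<close> \<open>0 < b\<close> by blast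
qed

lemma pi_decomposition_exists:
  assumes "\<alpha> \<in> K" and "\<alpha> \<noteq> 0"
  shows "\<exists>n::int. \<exists>\<zeta>\<in>roots_of_unity K. \<exists>u\<in>one_units a K. \<alpha> = \<zeta> * \<pi> powi n * u"
proof -
  obtain n where n: "a \<alpha> = a \<pi> powi n"
    using absv_eq_uniformizer_powi assms by blast
  define \<beta> where "\<beta> = \<alpha> * \<pi> powi (- n)"
  have "\<beta> \<in> K"
    unfolding \<beta>_def using assms(1) uniformizer_mem subfield_mult[OF subfield_K] subfield_powi[OF subfield_K]
    by blast
  moreover have "a \<beta> = 1"
    unfolding \<beta>_def using n absv_uniformizer_pos by (simp add: power_int_minus)
  ultimately obtain \<zeta> b where \<zeta>: "\<zeta> \<in> K" "0 < b" "\<zeta> ^ b = 1" "a (\<zeta> - \<beta>) < 1"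
    using teichmueller_lift by blast
  then have "a \<zeta> = 1"
    using root_of_unity_absv by blast
  then have "\<zeta> \<noteq> 0"
    by auto
  define u where "u = \<beta> / \<zeta>"
  have "u - 1 = (\<beta> - \<zeta>) / \<zeta>"
    unfolding u_def using \<open>\<zeta> \<noteq> 0\<close> by (simp add: field_simps)
  then have "u \<in> one_units a K"
    unfolding one_units_def u_def
    using \<zeta> \<open>\<beta> \<in> K\<close> \<open>a \<zeta> = 1\<close> absv_diff_commute[of \<beta> \<zeta>] subfield_divide[OF subfield_K] by simp
  moreover have "\<zeta> \<in> roots_of_unity K"
    unfolding roots_of_unity_def using \<zeta> by blast
  moreover have "\<alpha> = \<zeta> * \<pi> powi n * u"
    unfolding u_def \<beta>_def using \<open>\<zeta> \<noteq> 0\<close> uniformizer_nonzero by (simp add: power_int_minus field_simps)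
  ultimately show ?thesis
    by blast
qed

text \<open>\<open>unit_part x w\<close> characterises \<open>w\<close> as the value of \<open>\<langle>x\<rangle>\<^sub>\<pi>\<close>.\<close>

definition unit_part :: "'a \<Rightarrow> 'a \<Rightarrow> bool" where
  "unit_part x w \<longleftrightarrow> a (w - 1) < 1 \<and> (\<exists>N>0. \<exists>k::int. x ^ N = \<pi> powi k * w ^ N)"

lemma unit_part_common_exponent:
  assumes "unit_part x w" and "unit_part y w'"
  obtains N k k' where "0 < N" "x ^ N = \<pi> powi k * w ^ N" "y ^ N = \<pi> powi k' * w' ^ N"
proof -
  obtain N k where "0 < N" and N: "x ^ N = \<pi> powi k * w ^ N"
    using assms(1) unfolding unit_part_def by blast
  obtain N' k' where "0 < N'" and N': "y ^ N' = \<pi> powi k' * w' ^ N'"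
    using assms(2) unfolding unit_part_def by blast
  have "x ^ (N * N') = \<pi> powi (k * int N') * w ^ (N * N')"
    using N by (simp add: power_mult power_mult_distrib power_int_power')
  moreover have "y ^ (N * N') = \<pi> powi (k' * int N) * w' ^ (N * N')"
    using N' by (simp add: power_mult power_mult_distrib power_int_power' mult.commute[of N])
  moreover have "0 < N * N'"
    using \<open>0 < N\<close> \<open>0 < N'\<close> by simp
  ultimately show ?thesis
    using that by blast
qed

lemma unit_part_unique:
  assumes "unit_part x w" and "unit_part x w'"
  shows "w = w'"
proof -
  obtain N k k' where "0 < N" and N: "x ^ N = \<pi> powi k * w ^ N" "x ^ N = \<pi> powi k' * w' ^ N"
    using unit_part_common_exponent[OF assms] by metis
  have w: "a (w - 1) < 1" "a (w' - 1) < 1"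
    using assms unfolding unit_part_def by blast+
  then have "a w = 1" and "a w' = 1"
    by (simp_all add: one_unit_absv)
  then have "a \<pi> powi k = a \<pi> powi k'"
    using arg_cong[OF N(1)[symmetric, unfolded N(2)], of a] by simp
  then have "k = k'"
    by (rule absv_uniformizer_powi_inj)
  then have "w ^ N = w' ^ N"
    using N uniformizer_nonzero by simp
  then have "(w / w') ^ N = 1"
    using \<open>a w' = 1\<close> by (auto simp: power_divide)
  then have "w / w' = 1"
    using one_unit_torsion_free one_unit_divide[OF w] \<open>0 < N\<close> by blast
  then show ?thesis
    using \<open>a w' = 1\<close> by (auto simp: divide_eq_1_iff)
qed

lemma unit_part_mult:
  assumes "unit_part x w" and "unit_part y w'"
  shows "unit_part (x * y) (w * w')"
proof -
  obtain N k k' where "0 < N" "x ^ N = \<pi> powi k * w ^ N" "y ^ N = \<pi> powi k' * w' ^ N"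
    using unit_part_common_exponent[OF assms] by metis
  then have "(x * y) ^ N = \<pi> powi (k + k') * (w * w') ^ N"
    using uniformizer_nonzero by (simp add: power_mult_distrib power_int_add)
  moreover have "a (w * w' - 1) < 1"
    using assms one_unit_mult unfolding unit_part_def by blast
  ultimately show ?thesis
    unfolding unit_part_def using \<open>0 < N\<close> by blast
qed

lemma unit_part_decomposition:
  assumes "\<zeta> \<in> roots_of_unity K" and "a (u - 1) < 1"
  shows "unit_part (\<zeta> * \<pi> powi n * u) u"
proof -
  obtain m where "0 < m" and "\<zeta> ^ m = 1"
    using assms(1) unfolding roots_of_unity_def by blast
  then have "(\<zeta> * \<pi> powi n * u) ^ m = \<pi> powi (n * int m) * u ^ m"
    by (simp add: power_mult_distrib power_int_power')
  then show ?thesis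
    unfolding unit_part_def using \<open>0 < m\<close> assms(2) by blast
qed

lemma pi_char_eqI:
  assumes "\<zeta> \<in> roots_of_unity K" and "u \<in> one_units a K" and "\<alpha> = \<zeta> * \<pi> powi n * u"
  shows "pi_char a K \<pi> \<alpha> = u"
  unfolding pi_char_def
proof (rule the_equality)
  show "u \<in> one_units a K \<and> (\<exists>n::int. \<exists>\<zeta>\<in>roots_of_unity K. \<alpha> = \<zeta> * \<pi> powi n * u)"
    using assms by blast
next
  fix u'
  assume "u' \<in> one_units a K \<and> (\<exists>n::int. \<exists>\<zeta>\<in>roots_of_unity K. \<alpha> = \<zeta> * \<pi> powi n * u')"
  then show "u' = u"
    using assms unit_part_decomposition unit_part_unique unfolding one_units_def by (metis mem_Collect_eq)
qed

lemma unit_part_exists: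
  assumes "x \<in> L" and "x \<noteq> 0"
  shows "\<exists>w. unit_part x w"
proof -
  obtain m k where "0 < m" and mk: "a x ^ m = a \<pi> powi k"
    using absv_power_eq_uniformizer_powi[OF assms] by blast
  define \<beta> where "\<beta> = x ^ m * \<pi> powi (- k)"
  have "\<beta> \<in> L"
    unfolding \<beta>_def using assms(1) uniformizer_mem K_subset_L subfield_power[OF subfield_L]
      subfield_mult[OF subfield_L] subfield_powi[OF subfield_L] by blast
  moreover have "a \<beta> = 1"
    unfolding \<beta>_def using mk absv_uniformizer_pos by (simp add: power_int_minus)
  ultimately obtain M where "0 < M" and "a (\<beta> ^ M - 1) < 1"
    using unit_power_one_unit by blast
  then obtain w where w: "a (w - 1) < 1" "w ^ (m * M) = \<beta> ^ M"
    using one_unit_has_root[OF alg_closed, of "\<beta> ^ M" "m * M"] \<open>0 < m\<close> by auto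
  have "x ^ m = \<pi> powi k * \<beta>"
    unfolding \<beta>_def using uniformizer_nonzero by (simp add: power_int_minus)
  then have "x ^ (m * M) = \<pi> powi (k * int M) * w ^ (m * M)"
    using w(2) by (simp add: power_mult power_mult_distrib power_int_power')
  then show ?thesis
    unfolding unit_part_def using w(1) \<open>0 < m\<close> \<open>0 < M\<close> by (intro exI conjI) auto
qed

definition ext_char :: "'a \<Rightarrow> 'a" where
  "ext_char x = (THE w. unit_part x w)"

lemma ext_char_eq:
  assumes "x \<in> L - {0}" and "unit_part x w"
  shows "ext_char x = w"
  unfolding ext_char_def using assms(2) unit_part_unique by blast

lemma unit_part_ext_char:
  assumes "x \<in> L - {0}"
  shows "unit_part x (ext_char x)"
  using unit_part_exists[of x] ext_char_eq[OF assms] assms by blast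

lemma ext_char_one_unit_valued:
  assumes "x \<in> L - {0}"
  shows "ext_char x \<in> one_units a UNIV"
  using unit_part_ext_char[OF assms] unfolding unit_part_def one_units_def by simp

lemma ext_char_restrict:
  assumes "\<alpha> \<in> K - {0}"
  shows "ext_char \<alpha> = pi_char a K \<pi> \<alpha>"
proof -
  obtain n \<zeta> u where d: "\<zeta> \<in> roots_of_unity K" "u \<in> one_units a K" "\<alpha> = \<zeta> * \<pi> powi n * u"
    using pi_decomposition_exists assms by blast
  then have "unit_part \<alpha> u"
    using unit_part_decomposition unfolding one_units_def by blast
  then show ?thesis
    using ext_char_eq assms K_subset_L pi_char_eqI[OF d] by auto
qed

lemma char_S_ext_char: "char_S a p L ext_char"
  unfolding char_S_def
proof (intro conjI ballI)
  fix x
  assume "x \<in> L - {0}"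
  then show "ext_char x \<noteq> 0"
    using ext_char_one_unit_valued one_unit_absv unfolding one_units_def by fastforce
next
  fix x y
  assume "x \<in> L - {0}" and "y \<in> L - {0}"
  moreover have "x * y \<in> L - {0}"
    using calculation subfield_mult[OF subfield_L] by auto
  ultimately show "ext_char (x * y) = ext_char x * ext_char y"
    using unit_part_mult unit_part_ext_char ext_char_eq by blast
next
  fix \<zeta>
  assume "\<zeta> \<in> roots_of_unity L"
  then obtain m where "\<zeta> \<in> L" "0 < m" "\<zeta> ^ m = 1"
    unfolding roots_of_unity_def by blast
  then have "\<zeta> \<in> L - {0}"
    by (auto simp: power_0_left)
  moreover have "unit_part \<zeta> 1"
    unfolding unit_part_def using \<open>0 < m\<close> \<open>\<zeta> ^ m = 1\<close> by (intro conjI exI[of _ m]) (auto intro: exI[of _ 0])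
  ultimately show "ext_char \<zeta> = 1"
    by (rule ext_char_eq)
next
  have "ext_char u = u" if "u \<in> one_units a L" for u
  proof (rule ext_char_eq)
    show "u \<in> L - {0}"
      using that one_unit_absv unfolding one_units_def by auto
    show "unit_part u u"
      using that unfolding unit_part_def one_units_def by (intro conjI exI[of _ 1] exI[of _ 0]) auto
  qed
  then show "\<exists>y\<in>zp p. \<forall>u\<in>one_units a L. abs_tendsto a (\<lambda>n. u ^ nat (y n)) (ext_char u)"
    using one_mem_zp[OF prime_gt_1_nat[OF prime_p]] unfolding abs_tendsto_def
    by (intro bexI[of _ "\<lambda>n. if n = 0 then 0 else 1"]) (auto intro: exI[of _ 1])
qed

lemma char_S_power:
  assumes "char_S a p L s" and "x \<in> L - {0}"
  shows "s (x ^ N) = s x ^ N"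
proof (induction N)
  case 0
  show ?case
    using assms(1) one_mem_roots_of_unity[OF subfield_L] unfolding char_S_def by simp
next
  case (Suc N)
  have "x ^ N \<in> L - {0}"
    using assms(2) subfield_power[OF subfield_L] by auto
  then show ?case
    using assms Suc.IH unfolding char_S_def by (simp add: mult.commute)
qed

text \<open>Fixing \<open>1 + \<pi>\<close> forces the exponent of \<open>s\<close> to act trivially on all 1-units.\<close>

lemma char_S_one_unit_eq:
  assumes "char_S a p L s" and agree: "\<forall>\<alpha>\<in>K - {0}. s \<alpha> = pi_char a K \<pi> \<alpha>"
    and "u \<in> one_units a L"
  shows "s u = u"
proof -
  obtain y where y: "\<forall>u\<in>one_units a L. abs_tendsto a (\<lambda>n. u ^ nat (y n)) (s u)"
    using assms(1) unfolding char_S_def by blast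
  define v where "v = 1 + \<pi>"
  have "v \<in> one_units a K"
    unfolding v_def one_units_def using subfield_add[OF subfield_K subfield_1[OF subfield_K] uniformizer_mem]
      absv_uniformizer_less_1 by simp
  then have "pi_char a K \<pi> v = v"
    using one_mem_roots_of_unity[OF subfield_K] by (intro pi_char_eqI[where n = 0]) auto
  moreover have "v \<in> K - {0}"
    using \<open>v \<in> one_units a K\<close> one_unit_absv unfolding one_units_def by force
  ultimately have "abs_tendsto a (\<lambda>n. v ^ nat (y n)) v"
    using y agree \<open>v \<in> one_units a K\<close> K_subset_L unfolding one_units_def by auto
  moreover have "a (v - 1) < 1" and "v \<noteq> 1"
    using \<open>v \<in> one_units a K\<close> uniformizer_nonzero unfolding one_units_def v_def by auto
  moreover have "a (u - 1) < 1"
    using assms(3) unfolding one_units_def by simp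
  ultimately have "abs_tendsto a (\<lambda>n. u ^ nat (y n)) u"
    using one_unit_exponents_tendsto[of u v "\<lambda>n. nat (y n)"] by blast
  then show ?thesis
    using y assms(3) abs_tendsto_unique by blast
qed

lemma uniformizer_powi_mem: "\<pi> powi k \<in> K - {0}"
  using subfield_powi[OF subfield_K uniformizer_mem] uniformizer_nonzero by simp

lemma pi_char_uniformizer_powi: "pi_char a K \<pi> (\<pi> powi k) = 1"
  using one_mem_roots_of_unity[OF subfield_K] subfield_1[OF subfield_K]
  by (intro pi_char_eqI[where \<zeta> = 1 and n = k]) (auto simp: one_units_def)

lemma unit_part_power_one_unit:
  assumes "x \<in> L" and "x ^ N = \<pi> powi k * w ^ N" and "a (w - 1) < 1"
  shows "w ^ N \<in> one_units a L"
proof -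
  have "w ^ N = x ^ N * \<pi> powi (- k)"
    using assms(2) uniformizer_nonzero by (simp add: power_int_minus field_simps)
  then have "w ^ N \<in> L"
    using assms(1) uniformizer_mem K_subset_L subfield_power[OF subfield_L] subfield_mult[OF subfield_L]
      subfield_powi[OF subfield_L] by auto
  then show ?thesis
    unfolding one_units_def using one_unit_power[OF assms(3)] by simp
qed

lemma char_S_eq_ext_char:
  assumes s: "char_S a p L s" and s_one_unit: "\<forall>x\<in>L - {0}. s x \<in> one_units a UNIV"
    and agree: "\<forall>\<alpha>\<in>K - {0}. s \<alpha> = pi_char a K \<pi> \<alpha>" and x: "x \<in> L - {0}"
  shows "s x = ext_char x"
proof -
  define w where "w = ext_char x"
  obtain N k where "0 < N" and N: "x ^ N = \<pi> powi k * w ^ N" and w: "a (w - 1) < 1"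
    using unit_part_ext_char[OF x] unfolding unit_part_def w_def by auto
  have "w ^ N \<in> one_units a L"
    using unit_part_power_one_unit N w x by blast
  then have "w ^ N \<in> L - {0}" and "s (w ^ N) = w ^ N"
    using char_S_one_unit_eq[OF s agree] one_unit_absv unfolding one_units_def by force+
  have "s x ^ N = s (\<pi> powi k * w ^ N)"
    using char_S_power[OF s x, of N] N by simp
  also have "\<dots> = s (\<pi> powi k) * s (w ^ N)"
    using s uniformizer_powi_mem \<open>w ^ N \<in> L - {0}\<close> K_subset_L unfolding char_S_def by blast
  finally have "s x ^ N = w ^ N"
    using agree uniformizer_powi_mem pi_char_uniformizer_powi \<open>s (w ^ N) = w ^ N\<close> by simp
  moreover have "a (s x - 1) < 1"
    using s_one_unit x unfolding one_units_def by blast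
  moreover have "w \<noteq> 0"
    using one_unit_absv[OF w] by auto
  ultimately have "s x / w = 1"
    using one_unit_torsion_free[OF one_unit_divide[OF _ w]] \<open>0 < N\<close> by (simp add: power_divide)
  then show ?thesis
    using \<open>w \<noteq> 0\<close> unfolding w_def by simp
qed

end

theorem proposition2p8:
  fixes a :: "'a::field \<Rightarrow> real" and p :: nat and K L :: "'a set" and \<pi> :: 'a
  assumes "prime p" and "CHAR('a) = p"
    and "nonarch_abs a" and "alg_closed TYPE('a)" and "abs_complete a UNIV"
    and "is_subfield K" and "abs_complete a K" and "uniformizer a K \<pi>" and "finite_residue a K"
    and "\<forall>x. \<forall>e>0. \<exists>y. algebraic_over K y \<and> a (x - y) < e"
    and "is_subfield L" and "K \<subseteq> L" and "finite_ext K L"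
  shows "\<exists>s. char_S a p L s \<and> (\<forall>x\<in>L - {0}. s x \<in> one_units a UNIV)
            \<and> (\<forall>\<alpha>\<in>K - {0}. s \<alpha> = pi_char a K \<pi> \<alpha>)
            \<and> (\<forall>s'. char_S a p L s' \<and> (\<forall>x\<in>L - {0}. s' x \<in> one_units a UNIV)
                    \<and> (\<forall>\<alpha>\<in>K - {0}. s' \<alpha> = pi_char a K \<pi> \<alpha>)
                 \<longrightarrow> (\<forall>x\<in>L - {0}. s' x = s x))"
proof -
  obtain B where "finite B" and "L = span_over K B"
    using assms(13) unfolding finite_ext_iff_span_over by blast
  obtain R where "finite R" and "\<forall>x\<in>K. a x \<le> 1 \<longrightarrow> (\<exists>r\<in>R. a (x - r) < 1)"
    using assms(9) unfolding finite_residue_def by blast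
  then interpret local_field_extension a p K L \<pi> B R
    using assms \<open>finite B\<close> \<open>L = span_over K B\<close>
    by unfold_locales (simp_all add: nonarch_field_def)
  show ?thesis
    using char_S_ext_char ext_char_one_unit_valued ext_char_restrict char_S_eq_ext_char by blast
qed

end
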